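(* Let $m$ inputs have sizes $w_1,\dots,w_m$, each at most $\frac{q}{2}$, with $s=\sum_{i} w_i$, where $q$ is the reducer capacity. Consider the following algorithm: pack the inputs into bins of capacity $\frac{q}{2}$ using First-Fit Decreasing (or Best-Fit Decreasing); if $x$ bins are obtained, create $\frac{x(x-1)}{2}$ reducers, one for each unordered pair of distinct bins, and assign to it all inputs of both bins. The resulting A2A mapping schema uses at most $\frac{8s^2}{q^2}$ reducers and has communication cost at most $\frac{4s^2}{q}$.
   Context: An A2A mapping schema for inputs with sizes $w_1,\dots,w_m$ and reducer capacity $q$ is an assignment of the inputs to a collection of reducers (each input may go to several reducers) such that every reducer receives inputs of total size at most $q$ and every pair of distinct inputs is assigned together to at least one reducer. The communication cost is the sum over reducers of the total size of the inputs assigned to it. *)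

theory Defs
  imports Complex_Main
begin

text \<open>Inputs are indexed by natural numbers 0..m-1; the size of input i is w i.
  A bin (and a reducer) is represented by the list of the indices of its inputs.\<close>

definition load :: "(nat \<Rightarrow> real) \<Rightarrow> nat list \<Rightarrow> real" where
  "load w b = (\<Sum>i\<leftarrow>b. w i)"

fun ff_insert :: "real \<Rightarrow> (nat \<Rightarrow> real) \<Rightarrow> nat \<Rightarrow> nat list list \<Rightarrow> nat list list" where
  "ff_insert cap w i [] = [[i]]"
| "ff_insert cap w i (b # bs) =
     (if load w b + w i \<le> cap then (i # b) # bs else b # ff_insert cap w i bs)"

definition bf_insert :: "real \<Rightarrow> (nat \<Rightarrow> real) \<Rightarrow> nat \<Rightarrow> nat list list \<Rightarrow> nat list list" where
  "bf_insert cap w i bs =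
     (let cands = filter (\<lambda>j. load w (bs ! j) + w i \<le> cap) [0..<length bs] in
      if cands = [] then bs @ [[i]]
      else let j = foldl (\<lambda>a k. if load w (bs ! a) < load w (bs ! k) then k else a)
                         (hd cands) (tl cands)
           in bs[j := i # bs ! j])"

definition first_fit :: "real \<Rightarrow> (nat \<Rightarrow> real) \<Rightarrow> nat list \<Rightarrow> nat list list" where
  "first_fit cap w order = foldl (\<lambda>bs i. ff_insert cap w i bs) [] order"

definition best_fit :: "real \<Rightarrow> (nat \<Rightarrow> real) \<Rightarrow> nat list \<Rightarrow> nat list list" where
  "best_fit cap w order = foldl (\<lambda>bs i. bf_insert cap w i bs) [] order"

definition decreasing_order :: "(nat \<Rightarrow> real) \<Rightarrow> nat \<Rightarrow> nat list \<Rightarrow> bool" where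
  "decreasing_order w m order \<longleftrightarrow>
     distinct order \<and> set order = {..<m} \<and> sorted_wrt (\<lambda>i j. w j \<le> w i) order"

definition pair_reducers :: "nat list list \<Rightarrow> nat set list" where
  "pair_reducers bins =
     [set (bins ! j) \<union> set (bins ! k). j \<leftarrow> [0..<length bins], k \<leftarrow> [Suc j..<length bins]]"

definition comm_cost :: "(nat \<Rightarrow> real) \<Rightarrow> nat set list \<Rightarrow> real" where
  "comm_cost w R = (\<Sum>r\<leftarrow>R. \<Sum>i\<in>r. w i)"

end

theory Submission
  imports Defs "HOL-Library.Multiset"
begin

text \<open>Both First-Fit and Best-Fit open a new bin only for an item that fits in no existing bin,
  so any two bins together exceed the capacity c = q/2.
  Summing over the x(x-1)/2 pairs of bins counts each load x - 1 times, so
  c x(x-1)/2 \<le> (x-1) s, i.e. x \<le> 4s/q as soon as x \<ge> 2. Hence there are at most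
  x^2/2 \<le> 8s^2/q^2 reducers, and the communication cost is at most the total
  load of the bins of all pairs, (x-1) s \<le> 4s^2/q.\<close>

lemma load_Cons [simp]: "load w (i # b) = w i + load w b"
  by (simp add: load_def)

lemma sum_list_concat: "sum_list (concat xss) = sum_list (map sum_list xss)"
  by (induction xss) auto

lemma mset_concat_add_to_nth:
  "j < length xss \<Longrightarrow> mset (concat (xss[j := x # xss ! j])) = add_mset x (mset (concat xss))"
  by (induction xss arbitrary: j) (auto split: nat.split)

lemma sum_set_le_load: "(\<And>i. i \<in> set b \<Longrightarrow> 0 \<le> w i) \<Longrightarrow> (\<Sum>i\<in>set b. w i) \<le> load w b"
proof (induction b)
  case Nil
  then show ?case by (simp add: load_def)
next
  case (Cons i b)
  have "(\<Sum>j\<in>set (i # b). w j) \<le> w i + (\<Sum>j\<in>set b. w j)"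
    using Cons.prems by (auto simp: sum.insert_if)
  then show ?case using Cons by auto
qed

definition fit_step :: "real \<Rightarrow> (nat \<Rightarrow> real) \<Rightarrow> nat \<Rightarrow> nat list list \<Rightarrow> nat list list \<Rightarrow> bool" where
  "fit_step cap w i bs bs' \<longleftrightarrow>
     (\<exists>j<length bs. bs' = bs[j := i # bs ! j])
     \<or> (bs' = bs @ [[i]] \<and> (\<forall>j<length bs. cap < load w (bs ! j) + w i))"

definition pairwise_overfull :: "real \<Rightarrow> (nat \<Rightarrow> real) \<Rightarrow> nat list list \<Rightarrow> bool" where
  "pairwise_overfull cap w bs \<longleftrightarrow>
     (\<forall>j k. j < k \<longrightarrow> k < length bs \<longrightarrow> cap < load w (bs ! j) + load w (bs ! k))"

lemma pairwise_overfull_mono: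
  assumes "pairwise_overfull cap w bs" and "length bs' = length bs"
    and "\<And>k. k < length bs \<Longrightarrow> load w (bs ! k) \<le> load w (bs' ! k)"
  shows "pairwise_overfull cap w bs'"
  unfolding pairwise_overfull_def
proof (intro allI impI)
  fix j k assume "j < k" "k < length bs'"
  then have "cap < load w (bs ! j) + load w (bs ! k)"
    using assms(1,2) unfolding pairwise_overfull_def by simp
  also have "\<dots> \<le> load w (bs' ! j) + load w (bs' ! k)"
    using assms(2,3) \<open>j < k\<close> \<open>k < length bs'\<close> by (intro add_mono) auto
  finally show "cap < load w (bs' ! j) + load w (bs' ! k)" .
qed

lemma ff_insert_fit_step: "fit_step cap w i bs (ff_insert cap w i bs)"
proof (induction bs)
  case Nil
  then show ?case by (simp add: fit_step_def)
next
  case (Cons b bs)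
  show ?case
  proof (cases "load w b + w i \<le> cap")
    case True
    then show ?thesis unfolding fit_step_def by (intro disjI1 exI[of _ 0]) auto
  next
    case False
    from Cons.IH[unfolded fit_step_def] show ?thesis
    proof (elim disjE conjE exE)
      fix j assume "j < length bs" "ff_insert cap w i bs = bs[j := i # bs ! j]"
      then have "Suc j < length (b # bs)"
        "ff_insert cap w i (b # bs) = (b # bs)[Suc j := i # (b # bs) ! Suc j]"
        using False by auto
      then show ?thesis unfolding fit_step_def by blast
    next
      assume "ff_insert cap w i bs = bs @ [[i]]" "\<forall>j<length bs. cap < load w (bs ! j) + w i"
      then show ?thesis using False unfolding fit_step_def by (auto simp: nth_Cons split: nat.split)
    qed
  qed
qed

lemma foldl_choose_in_set: "foldl (\<lambda>a k. if P a k then k else a) a0 ks \<in> insert a0 (set ks)"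
proof (induction ks arbitrary: a0)
  case (Cons k ks)
  then show ?case by (auto split: if_splits)
qed simp

lemma bf_insert_fit_step: "fit_step cap w i bs (bf_insert cap w i bs)"
proof -
  define cands where "cands = filter (\<lambda>j. load w (bs ! j) + w i \<le> cap) [0..<length bs]"
  show ?thesis
  proof (cases "cands = []")
    case True
    then have "\<forall>j<length bs. cap < load w (bs ! j) + w i"
      unfolding cands_def by (force simp: filter_empty_conv)
    then show ?thesis using True unfolding bf_insert_def fit_step_def cands_def[symmetric] by auto
  next
    case False
    define j where "j = foldl (\<lambda>a k. if load w (bs ! a) < load w (bs ! k) then k else a)
                         (hd cands) (tl cands)"
    have "j \<in> insert (hd cands) (set (tl cands))"
      unfolding j_def by (rule foldl_choose_in_set)
    also have "\<dots> = set cands" using False by (cases cands) auto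
    finally have "j < length bs" unfolding cands_def by auto
    moreover have "bf_insert cap w i bs = bs[j := i # bs ! j]"
      using False unfolding bf_insert_def cands_def[symmetric] j_def Let_def by simp
    ultimately show ?thesis unfolding fit_step_def by blast
  qed
qed

lemma fit_step_mset_concat:
  "fit_step cap w i bs bs' \<Longrightarrow> mset (concat bs') = add_mset i (mset (concat bs))"
  unfolding fit_step_def
  by (auto simp: mset_concat_add_to_nth)

lemma fit_step_pairwise_overfull:
  assumes overfull: "pairwise_overfull cap w bs" and "0 \<le> w i" and step: "fit_step cap w i bs bs'"
  shows "pairwise_overfull cap w bs'"
  using step unfolding fit_step_def
proof (elim disjE conjE exE)
  fix j assume "j < length bs" and bs': "bs' = bs[j := i # bs ! j]"
  then have grow: "load w (bs ! k) \<le> load w (bs' ! k)" if "k < length bs" for k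
    using \<open>0 \<le> w i\<close> that by (cases "k = j") auto
  show ?thesis
    by (rule pairwise_overfull_mono[OF overfull _ grow]) (simp add: bs')
next
  assume bs': "bs' = bs @ [[i]]" and no_fit: "\<forall>j<length bs. cap < load w (bs ! j) + w i"
  show ?thesis unfolding pairwise_overfull_def
  proof (intro allI impI)
    fix j k assume "j < k" "k < length bs'"
    then consider "k < length bs" | "k = length bs" using bs' by fastforce
    then show "cap < load w (bs' ! j) + load w (bs' ! k)"
      by cases (use overfull no_fit \<open>j < k\<close> in \<open>auto simp: bs' nth_append load_def pairwise_overfull_def\<close>)
  qed
qed

lemma foldl_fit_step:
  assumes step: "\<And>bs i. fit_step cap w i bs (f bs i)"
    and overfull: "pairwise_overfull cap w bs" and nonneg: "\<And>i. i \<in> set xs \<Longrightarrow> 0 \<le> w i"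
  shows "pairwise_overfull cap w (foldl f bs xs)
    \<and> mset (concat (foldl f bs xs)) = mset (concat bs) + mset xs"
  using overfull nonneg
proof (induction xs arbitrary: bs)
  case Nil
  then show ?case by simp
next
  case (Cons i xs)
  have "pairwise_overfull cap w (f bs i)"
    using fit_step_pairwise_overfull[OF Cons.prems(1) _ step] Cons.prems(2) by simp
  then show ?case
    using Cons.IH[of "f bs i"] Cons.prems(2) fit_step_mset_concat[OF step] by simp
qed

lemma first_fit_best_fit_packing:
  assumes "bs = first_fit cap w xs \<or> bs = best_fit cap w xs"
    and "\<And>i. i \<in> set xs \<Longrightarrow> 0 \<le> w i"
  shows "pairwise_overfull cap w bs \<and> mset (concat bs) = mset xs"
proof -
  have "pairwise_overfull cap w []" by (simp add: pairwise_overfull_def)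
  then show ?thesis
    using assms foldl_fit_step[of cap w "\<lambda>bs i. ff_insert cap w i bs"] ff_insert_fit_step
      foldl_fit_step[of cap w "\<lambda>bs i. bf_insert cap w i bs"] bf_insert_fit_step
    unfolding first_fit_def best_fit_def by auto
qed

lemma sum_upper_pairs_add:
  fixes L :: "nat \<Rightarrow> 'a::comm_ring_1"
  shows "(\<Sum>j<n. \<Sum>k\<in>{Suc j..<n}. L j + L k) = (of_nat n - 1) * (\<Sum>k<n. L k)"
proof (induction n)
  case 0
  then show ?case by simp
next
  case (Suc n)
  have "(\<Sum>j<Suc n. \<Sum>k\<in>{Suc j..<Suc n}. L j + L k)
      = (\<Sum>j<n. (\<Sum>k\<in>{Suc j..<n}. L j + L k) + (L j + L n))"
    by (simp add: sum.op_ivl_Suc)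
  also have "\<dots> = (of_nat n - 1) * (\<Sum>k<n. L k) + (\<Sum>j<n. L j) + of_nat n * L n"
    using Suc.IH by (simp add: sum.distrib)
  also have "\<dots> = (of_nat (Suc n) - 1) * (\<Sum>k<Suc n. L k)"
    by (simp add: algebra_simps)
  finally show ?case .
qed

lemma sum_pairs_of_loads:
  "(\<Sum>j<length bs. \<Sum>k\<in>{Suc j..<length bs}. load w (bs ! j) + load w (bs ! k))
     = (real (length bs) - 1) * (\<Sum>b\<leftarrow>bs. load w b)"
  by (simp add: sum_upper_pairs_add sum_list_sum_nth atLeast0LessThan)

lemma sum_list_map_pair_reducers:
  "sum_list (map g (pair_reducers bs)) =
     (\<Sum>j<length bs. \<Sum>k\<in>{Suc j..<length bs}. g (set (bs ! j) \<union> set (bs ! k)))"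
  unfolding pair_reducers_def
  by (simp add: sum_list_concat map_concat comp_def
      sum_set_upt_conv_sum_list_nat[symmetric] atLeast0LessThan)

lemma length_pair_reducers:
  "real (length (pair_reducers bs)) = real (length bs) * (real (length bs) - 1) / 2"
proof -
  have "real (length (pair_reducers bs)) = sum_list (map (\<lambda>_. 1 / 2 + 1 / 2) (pair_reducers bs))"
    by (simp add: sum_list_triv)
  also have "\<dots> = (real (length bs) - 1) * (\<Sum>k<length bs. 1 / 2)"
    unfolding sum_list_map_pair_reducers by (rule sum_upper_pairs_add)
  finally show ?thesis by simp
qed

lemma comm_cost_pair_reducers_le:
  assumes "\<And>b i. b \<in> set bs \<Longrightarrow> i \<in> set b \<Longrightarrow> 0 \<le> w i"
  shows "comm_cost w (pair_reducers bs) \<le> (real (length bs) - 1) * (\<Sum>b\<leftarrow>bs. load w b)"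
proof -
  let ?L = "\<lambda>j. load w (bs ! j)"
  have "comm_cost w (pair_reducers bs) \<le> (\<Sum>j<length bs. \<Sum>k\<in>{Suc j..<length bs}. ?L j + ?L k)"
    unfolding comm_cost_def sum_list_map_pair_reducers
  proof (intro sum_mono)
    fix j k assume "j \<in> {..<length bs}" "k \<in> {Suc j..<length bs}"
    then have "bs ! j \<in> set bs" "bs ! k \<in> set bs" by auto
    then have nonneg: "\<And>i. i \<in> set (bs ! j) \<union> set (bs ! k) \<Longrightarrow> 0 \<le> w i"
      using assms by blast
    have "(\<Sum>i\<in>set (bs ! j) \<union> set (bs ! k). w i) \<le> (\<Sum>i\<in>set (bs ! j). w i) + (\<Sum>i\<in>set (bs ! k). w i)"
      using nonneg by (simp add: sum_Un) (auto intro!: sum_nonneg)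
    also have "\<dots> \<le> ?L j + ?L k"
      using nonneg by (intro add_mono sum_set_le_load) auto
    finally show "(\<Sum>i\<in>set (bs ! j) \<union> set (bs ! k). w i) \<le> ?L j + ?L k" .
  qed
  also have "\<dots> = (real (length bs) - 1) * (\<Sum>b\<leftarrow>bs. load w b)"
    by (rule sum_pairs_of_loads)
  finally show ?thesis .
qed

lemma pairwise_overfull_length_le:
  assumes "pairwise_overfull cap w bs" and "2 \<le> length bs"
  shows "cap * real (length bs) \<le> 2 * (\<Sum>b\<leftarrow>bs. load w b)"
proof -
  let ?n = "length bs" and ?L = "\<lambda>j. load w (bs ! j)"
  have "(real ?n - 1) * (\<Sum>k<?n. cap / 2) = (\<Sum>j<?n. \<Sum>k\<in>{Suc j..<?n}. cap / 2 + cap / 2)"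
    by (rule sum_upper_pairs_add[symmetric])
  also have "\<dots> \<le> (\<Sum>j<?n. \<Sum>k\<in>{Suc j..<?n}. ?L j + ?L k)"
  proof (intro sum_mono)
    fix j k assume "j \<in> {..<?n}" "k \<in> {Suc j..<?n}"
    then have "cap < ?L j + ?L k"
      using assms(1) unfolding pairwise_overfull_def by simp
    then show "cap / 2 + cap / 2 \<le> ?L j + ?L k" by simp
  qed
  also have "\<dots> = (real ?n - 1) * (\<Sum>b\<leftarrow>bs. load w b)"
    by (rule sum_pairs_of_loads)
  finally have "(real ?n - 1) * (cap * real ?n / 2) \<le> (real ?n - 1) * (\<Sum>b\<leftarrow>bs. load w b)"
    by (simp add: mult.commute)
  moreover have "0 < real ?n - 1" using assms(2) by simp
  ultimately have "cap * real ?n / 2 \<le> (\<Sum>b\<leftarrow>bs. load w b)"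
    by (rule mult_left_le_imp_le)
  then show ?thesis by simp
qed

lemma pair_reducers_count_bound:
  assumes "pairwise_overfull cap w bs" and "0 < cap"
  shows "real (length (pair_reducers bs)) \<le> 2 * (\<Sum>b\<leftarrow>bs. load w b)^2 / cap^2"
proof (cases "2 \<le> length bs")
  case True
  let ?n = "real (length bs)" and ?s = "\<Sum>b\<leftarrow>bs. load w b"
  have "(cap * ?n)^2 \<le> (2 * ?s)^2"
    using pairwise_overfull_length_le[OF assms(1) True] assms(2) by (intro power_mono) auto
  then have "?n^2 \<le> 4 * ?s^2 / cap^2"
    using assms(2) by (simp add: field_simps power_mult_distrib)
  moreover have "real (length (pair_reducers bs)) \<le> ?n^2 / 2"
    by (simp add: length_pair_reducers power2_eq_square algebra_simps)
  ultimately show ?thesis by simp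
next
  case False
  then have "real (length bs) * (real (length bs) - 1) = 0"
    by (cases "length bs") auto
  then have "real (length (pair_reducers bs)) = 0"
    unfolding length_pair_reducers by simp
  then show ?thesis by simp
qed

lemma pair_reducers_cost_bound:
  assumes "pairwise_overfull cap w bs" and "0 < cap"
    and nonneg: "\<And>b i. b \<in> set bs \<Longrightarrow> i \<in> set b \<Longrightarrow> 0 \<le> w i"
  shows "comm_cost w (pair_reducers bs) \<le> 2 * (\<Sum>b\<leftarrow>bs. load w b)^2 / cap"
proof -
  let ?n = "real (length bs)" and ?s = "\<Sum>b\<leftarrow>bs. load w b"
  have "0 \<le> ?s"
    using nonneg by (force intro: sum_list_nonneg simp: load_def)
  have "comm_cost w (pair_reducers bs) \<le> (?n - 1) * ?s"
    using nonneg by (rule comm_cost_pair_reducers_le)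
  also have "\<dots> \<le> 2 * ?s^2 / cap"
  proof (cases "2 \<le> length bs")
    case True
    have "(?n - 1) * ?s \<le> ?n * ?s" using \<open>0 \<le> ?s\<close> by (simp add: algebra_simps)
    also have "\<dots> \<le> (2 * ?s / cap) * ?s"
      using pairwise_overfull_length_le[OF assms(1) True] assms(2) \<open>0 \<le> ?s\<close>
      by (intro mult_right_mono) (auto simp: field_simps)
    finally show ?thesis by (simp add: power2_eq_square)
  next
    case False
    then have "(?n - 1) * ?s \<le> 0" using \<open>0 \<le> ?s\<close> by (simp add: mult_nonpos_nonneg)
    also have "0 \<le> 2 * ?s^2 / cap" using assms(2) by simp
    finally show ?thesis .
  qed
  finally show ?thesis .
qed

lemma sum_loads_eq_if_mset_concat_eq:
  assumes "mset (concat bs) = mset xs"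
  shows "(\<Sum>b\<leftarrow>bs. load w b) = (\<Sum>i\<leftarrow>xs. w i)"
proof -
  have "(\<Sum>b\<leftarrow>bs. load w b) = (\<Sum>i\<leftarrow>concat bs. w i)"
    by (simp add: load_def map_concat sum_list_concat comp_def)
  also have "\<dots> = (\<Sum>i\<leftarrow>xs. w i)"
    using assms by (metis mset_map sum_mset_sum_list)
  finally show ?thesis .
qed

theorem theorem5:
  fixes w :: "nat \<Rightarrow> real" and m :: nat and q :: real
    and order :: "nat list" and bins :: "nat list list"
  assumes q_pos: "q > 0"
    and w_nonneg: "\<forall>i<m. 0 \<le> w i"
    and w_small: "\<forall>i<m. w i \<le> q / 2"
    and ord: "decreasing_order w m order"
    and alg: "bins = first_fit (q / 2) w order \<or> bins = best_fit (q / 2) w order"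
  shows "real (length (pair_reducers bins)) \<le> 8 * (\<Sum>i<m. w i)^2 / q^2
       \<and> comm_cost w (pair_reducers bins) \<le> 4 * (\<Sum>i<m. w i)^2 / q"
proof -
  have items: "set order = {..<m}" "distinct order"
    using ord by (auto simp: decreasing_order_def)
  have overfull: "pairwise_overfull (q / 2) w bins" and perm: "mset (concat bins) = mset order"
    using first_fit_best_fit_packing[OF alg] w_nonneg items by auto
  have "(\<Sum>b\<leftarrow>bins. load w b) = (\<Sum>i\<leftarrow>order. w i)"
    using perm by (rule sum_loads_eq_if_mset_concat_eq)
  also have "\<dots> = (\<Sum>i<m. w i)"
    using items by (simp add: sum_list_distinct_conv_sum_set)
  finally have total: "(\<Sum>b\<leftarrow>bins. load w b) = (\<Sum>i<m. w i)" .
  have "\<And>b i. b \<in> set bins \<Longrightarrow> i \<in> set b \<Longrightarrow> 0 \<le> w i"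
    using w_nonneg items by (metis perm UN_I set_concat set_mset_mset lessThan_iff)
  then show ?thesis
    using pair_reducers_count_bound[OF overfull] pair_reducers_cost_bound[OF overfull] q_pos
    unfolding total by (simp add: power_divide)
qed

end
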